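(* Let $\Gamma$ be a countable group, let $f$ be a strongly ergodic measure preserving action of $\Gamma$ on a standard Borel probability space $(X,\mu)$, and let $g$ be a measure preserving action of $\Gamma$ on a finite probability space $(Y,\nu)$ with $\nu(\{y\})>0$ for all $y\in Y$. If $f$ weakly contains $g$, then $g$ is a factor of $f$.
   Context: Actions are right actions, written $x\mapsto x\gamma$. For a measurable set $A$ and $\gamma\in\Gamma$, $A^\gamma$ denotes the image of $A$ under $\gamma$. Weak containment: an action $f$ of $\Gamma$ on $(X,\mu)$ weakly contains an action $g$ on $(Y,\nu)$ ($f\succeq g$) if for all measurable $A_1,\dots,A_n\subseteq Y$, all finite $F\subseteq\Gamma$ and all $\varepsilon>0$ there are measurable $B_1,\dots,B_n\subseteq X$ with $|\mu(B_i^\gamma\cap B_j)-\nu(A_i^\gamma\cap A_j)|<\varepsilon$ for all $1\le i,j\le n$, $\gamma\in F$. The action $g$ is a factor of $f$ if there is a $\Gamma$-equivariant measurable map $\Phi:X\to Y$ with $\Phi_*\mu=\nu$. A sequence of measurable sets $A_n\subseteq X$ is almost invariant if $\mu(A_n\setminus A_n\gamma)\to 0$ for every $\gamma\in\Gamma$, and trivial if $\mu(A_n)(1-\mu(A_n))\to0$. An action is strongly ergodic if it is ergodic and every almost invariant sequence is trivial. *)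

theory Defs
  imports "HOL-Probability.Probability" "HOL-Algebra.Group"
begin

definition right_action :: "('g, 'c) monoid_scheme \<Rightarrow> 'a set \<Rightarrow> ('a \<Rightarrow> 'g \<Rightarrow> 'a) \<Rightarrow> bool" where
  "right_action G S f \<longleftrightarrow>
     (\<forall>\<gamma>\<in>carrier G. \<forall>x\<in>S. f x \<gamma> \<in> S) \<and>
     (\<forall>x\<in>S. f x \<one>\<^bsub>G\<^esub> = x) \<and>
     (\<forall>x\<in>S. \<forall>\<gamma>\<in>carrier G. \<forall>\<delta>\<in>carrier G. f (f x \<gamma>) \<delta> = f x (\<gamma> \<otimes>\<^bsub>G\<^esub> \<delta>))"

definition mp_action :: "('g, 'c) monoid_scheme \<Rightarrow> 'a measure \<Rightarrow> ('a \<Rightarrow> 'g \<Rightarrow> 'a) \<Rightarrow> bool" where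
  "mp_action G M f \<longleftrightarrow> right_action G (space M) f \<and>
     (\<forall>\<gamma>\<in>carrier G. (\<lambda>x. f x \<gamma>) \<in> measurable M M \<and> distr M M (\<lambda>x. f x \<gamma>) = M)"

definition set_act :: "('a \<Rightarrow> 'g \<Rightarrow> 'a) \<Rightarrow> 'a set \<Rightarrow> 'g \<Rightarrow> 'a set" where
  "set_act f A \<gamma> = (\<lambda>x. f x \<gamma>) ` A"

definition ergodic_action :: "('g, 'c) monoid_scheme \<Rightarrow> 'a measure \<Rightarrow> ('a \<Rightarrow> 'g \<Rightarrow> 'a) \<Rightarrow> bool" where
  "ergodic_action G M f \<longleftrightarrow>
     (\<forall>A\<in>sets M. (\<forall>\<gamma>\<in>carrier G. set_act f A \<gamma> = A) \<longrightarrow> measure M A = 0 \<or> measure M A = 1)"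

definition almost_invariant :: "('g, 'c) monoid_scheme \<Rightarrow> 'a measure \<Rightarrow> ('a \<Rightarrow> 'g \<Rightarrow> 'a) \<Rightarrow> (nat \<Rightarrow> 'a set) \<Rightarrow> bool" where
  "almost_invariant G M f A \<longleftrightarrow> (\<forall>n. A n \<in> sets M) \<and>
     (\<forall>\<gamma>\<in>carrier G. (\<lambda>n. measure M (A n - set_act f (A n) \<gamma>)) \<longlonglongrightarrow> 0)"

definition trivial_seq :: "'a measure \<Rightarrow> (nat \<Rightarrow> 'a set) \<Rightarrow> bool" where
  "trivial_seq M A \<longleftrightarrow> (\<lambda>n. measure M (A n) * (1 - measure M (A n))) \<longlonglongrightarrow> 0"

definition strongly_ergodic :: "('g, 'c) monoid_scheme \<Rightarrow> 'a measure \<Rightarrow> ('a \<Rightarrow> 'g \<Rightarrow> 'a) \<Rightarrow> bool" where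
  "strongly_ergodic G M f \<longleftrightarrow> ergodic_action G M f \<and>
     (\<forall>A. almost_invariant G M f A \<longrightarrow> trivial_seq M A)"

text \<open>f (on M) weakly contains g (on N); the sets A_1..A_n are indexed by 0..n-1.\<close>
definition weakly_contains ::
  "('g, 'c) monoid_scheme \<Rightarrow> 'a measure \<Rightarrow> ('a \<Rightarrow> 'g \<Rightarrow> 'a) \<Rightarrow> 'b measure \<Rightarrow> ('b \<Rightarrow> 'g \<Rightarrow> 'b) \<Rightarrow> bool" where
  "weakly_contains G M f N g \<longleftrightarrow>
     (\<forall>n::nat. \<forall>A :: nat \<Rightarrow> 'b set. \<forall>F. \<forall>\<epsilon>::real.
        (\<forall>i<n. A i \<in> sets N) \<and> finite F \<and> F \<subseteq> carrier G \<and> \<epsilon> > 0 \<longrightarrow>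
        (\<exists>B :: nat \<Rightarrow> 'a set. (\<forall>i<n. B i \<in> sets M) \<and>
           (\<forall>i<n. \<forall>j<n. \<forall>\<gamma>\<in>F.
              \<bar>measure M (set_act f (B i) \<gamma> \<inter> B j) - measure N (set_act g (A i) \<gamma> \<inter> A j)\<bar> < \<epsilon>)))"

definition is_factor ::
  "('g, 'c) monoid_scheme \<Rightarrow> 'a measure \<Rightarrow> ('a \<Rightarrow> 'g \<Rightarrow> 'a) \<Rightarrow> 'b measure \<Rightarrow> ('b \<Rightarrow> 'g \<Rightarrow> 'b) \<Rightarrow> bool" where
  "is_factor G M f N g \<longleftrightarrow>
     (\<exists>\<Phi>. \<Phi> \<in> measurable M N \<and> distr M N \<Phi> = N \<and>
        (AE x in M. \<forall>\<gamma>\<in>carrier G. \<Phi> (f x \<gamma>) = g (\<Phi> x) \<gamma>))"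

end

theory Submission
  imports Defs "HOL-Library.Ramsey"
begin

text \<open>
  Weak containment gives, for every stage m, sets approx m y (y \<in> N) whose joint distribution under
  a finite window of G mimics that of the points of N up to eps m \<rightarrow> 0.  The points where stages m
  and k give the same label form events agree m k which become almost invariant as m, k \<rightarrow> \<infinity>;
  by strong ergodicity their measures tend to 0 or 1.  Ramsey's theorem yields a subsequence of
  stages along which they are all small or all large; the first alternative contradicts a
  pigeonhole bound, the second makes each approx m y Cauchy for the pseudometric \<mu>(sym_diff A B).
  The limits C y (completeness of the measure algebra) have measure \<nu>{y}, overlap in null sets and
  are permuted by G like the points of N up to null sets; labelling by them is the factor map.
\<close>

section \<open>The symmetric-difference pseudometric on events\<close>

lemma nat_property_switches:
  fixes p :: "nat \<Rightarrow> bool"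
  assumes "p a" "\<not> p (a + d)"
  shows "\<exists>k<d. p (a + k) \<and> \<not> p (a + Suc k)"
  using assms
proof (induction d)
  case (Suc d)
  show ?case
  proof (cases "p (a + d)")
    case True
    then show ?thesis using Suc by (intro exI[of _ d]) auto
  next
    case False
    then obtain k where "k < d" "p (a + k)" "\<not> p (a + Suc k)" using Suc by blast
    then show ?thesis by (intro exI[of _ k]) auto
  qed
qed simp

lemma sym_diff_liminf_subset:
  fixes Q :: "nat \<Rightarrow> 'a set"
  shows "sym_diff (Q i) (\<Union>m. \<Inter>j. Q (m + j)) \<subseteq> (\<Union>k. sym_diff (Q (i + k)) (Q (Suc (i + k))))"
proof
  fix x assume x: "x \<in> sym_diff (Q i) (\<Union>m. \<Inter>j. Q (m + j))"
  show "x \<in> (\<Union>k. sym_diff (Q (i + k)) (Q (Suc (i + k))))"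
  proof (cases "x \<in> Q i")
    case True
    with x obtain d where "x \<notin> Q (i + d)" by blast
    from nat_property_switches[of "\<lambda>n. x \<in> Q n", OF True this] show ?thesis by auto
  next
    case False
    with x obtain m where m: "\<And>j. x \<in> Q (m + j)" by blast
    have "i < m"
      using m[of "i - m"] False by (cases "i < m") (simp_all add: not_less)
    then have "x \<in> Q (i + (m - i))" using m[of 0] by simp
    with nat_property_switches[of "\<lambda>n. x \<notin> Q n", OF False, of "m - i"] show ?thesis by auto
  qed
qed

context prob_space
begin

lemma measure_sym_diff:
  assumes "P \<in> events" "Q \<in> events"
  shows "prob (sym_diff P Q) = prob P + prob Q - 2 * prob (P \<inter> Q)"
proof -
  have "prob (sym_diff P Q) = prob (P - Q) + prob (Q - P)"
    using assms by (intro finite_measure_Union) auto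
  also have "prob (P - Q) = prob P - prob (P \<inter> Q)"
    using assms finite_measure_Diff' by simp
  also have "prob (Q - P) = prob Q - prob (P \<inter> Q)"
    using assms finite_measure_Diff' by (simp add: Int_commute)
  finally show ?thesis by simp
qed

lemma measure_sym_diff_triangle:
  assumes "P \<in> events" "Q \<in> events" "R \<in> events"
  shows "prob (sym_diff P R) \<le> prob (sym_diff P Q) + prob (sym_diff Q R)"
proof -
  have "prob (sym_diff P R) \<le> prob (sym_diff P Q \<union> sym_diff Q R)"
    using assms by (intro finite_measure_mono) auto
  also have "\<dots> \<le> prob (sym_diff P Q) + prob (sym_diff Q R)"
    using assms by (intro measure_Un_le) auto
  finally show ?thesis .
qed

lemma measure_diff_le_sym_diff:
  assumes "P \<in> events" "Q \<in> events"
  shows "\<bar>prob P - prob Q\<bar> \<le> prob (sym_diff P Q)"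
  using measure_sym_diff[OF assms] finite_measure_mono[of "P \<inter> Q" P]
    finite_measure_mono[of "P \<inter> Q" Q] assms
  by auto

lemma measure_Int_diff_le_sym_diff:
  assumes "P \<in> events" "Q \<in> events" "P' \<in> events" "Q' \<in> events"
  shows "\<bar>prob (P \<inter> Q) - prob (P' \<inter> Q')\<bar> \<le> prob (sym_diff P P') + prob (sym_diff Q Q')"
proof -
  have "\<bar>prob (P \<inter> Q) - prob (P' \<inter> Q')\<bar> \<le> prob (sym_diff (P \<inter> Q) (P' \<inter> Q'))"
    using assms by (intro measure_diff_le_sym_diff) auto
  also have "\<dots> \<le> prob (sym_diff P P' \<union> sym_diff Q Q')"
    using assms by (intro finite_measure_mono) auto
  also have "\<dots> \<le> prob (sym_diff P P') + prob (sym_diff Q Q')"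
    using assms by (intro measure_Un_le) auto
  finally show ?thesis .
qed

lemma sum_prob_le_Union_plus_overlaps:
  assumes "finite S" "\<And>y. y \<in> S \<Longrightarrow> P y \<in> events"
  shows "(\<Sum>y\<in>S. prob (P y)) \<le> prob (\<Union>y\<in>S. P y) + (\<Sum>y\<in>S. \<Sum>z\<in>S - {y}. prob (P y \<inter> P z))"
  using assms
proof (induction S rule: finite_induct)
  case (insert a S)
  let ?U = "\<Union>y\<in>S. P y"
  let ?D = "\<lambda>S. \<Sum>y\<in>S. \<Sum>z\<in>S - {y}. prob (P y \<inter> P z)"
  have sets: "P a \<in> events" "?U \<in> events" using insert by auto
  have IH: "(\<Sum>y\<in>S. prob (P y)) \<le> prob ?U + ?D S" using insert by blast
  have "prob (P a \<union> ?U) = prob (P a) + prob (?U - P a)"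
    using sets finite_measure_Union'[of "P a" "?U - P a"] by (simp add: Un_Diff_cancel)
  moreover have "prob (?U - P a) = prob ?U - prob (?U \<inter> P a)"
    using sets finite_measure_Diff' by blast
  moreover have "prob (?U \<inter> P a) \<le> (\<Sum>z\<in>S. prob (P a \<inter> P z))"
  proof -
    have "?U \<inter> P a = (\<Union>z\<in>S. P a \<inter> P z)" by blast
    also have "prob \<dots> \<le> (\<Sum>z\<in>S. prob (P a \<inter> P z))"
      using insert by (intro measure_UNION_le) auto
    finally show ?thesis .
  qed
  moreover have "(\<Sum>z\<in>S. prob (P a \<inter> P z)) + ?D S \<le> ?D (insert a S)"
  proof -
    have "?D S \<le> (\<Sum>y\<in>S. \<Sum>z\<in>insert a S - {y}. prob (P y \<inter> P z))"
      using insert(1) by (intro sum_mono sum_mono2) auto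
    moreover have "insert a S - {a} = S" using insert(2) by blast
    ultimately show ?thesis using insert(1,2) by simp
  qed
  ultimately show ?case using IH insert(1,2) by (simp add: Un_commute)
qed simp

lemma prob_sym_diff_liminf_le:
  assumes Q: "\<And>i. Q i \<in> events"
    and close: "\<And>i. prob (sym_diff (Q i) (Q (Suc i))) \<le> (1/2)^i"
  shows "prob (sym_diff (Q i) (\<Union>m. \<Inter>j. Q (m + j))) \<le> 2 * (1/2)^i"
proof -
  let ?E = "\<lambda>k. sym_diff (Q (i + k)) (Q (Suc (i + k)))"
  have E: "?E k \<in> events" for k using Q by auto
  have geom: "summable (\<lambda>k. (1/2::real)^(i+k))"
    by (simp add: power_add summable_mult)
  have sumE: "summable (\<lambda>k. prob (?E k))"
    using close by (intro summable_comparison_test[OF _ geom]) auto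
  have "prob (sym_diff (Q i) (\<Union>m. \<Inter>j. Q (m + j))) \<le> prob (\<Union>k. ?E k)"
    using sym_diff_liminf_subset[of Q i] E by (intro finite_measure_mono) auto
  also have "\<dots> \<le> (\<Sum>k. prob (?E k))"
    using E sumE by (intro finite_measure_subadditive_countably) auto
  also have "\<dots> \<le> (\<Sum>k. (1/2::real)^(i+k))"
    using close sumE geom by (intro suminf_le) auto
  also have "\<dots> = 2 * (1/2)^i"
    using suminf_geometric[of "1/2::real"] by (simp add: power_add suminf_mult)
  finally show ?thesis .
qed

lemma sym_diff_Cauchy_limit:
  fixes P :: "nat \<Rightarrow> 'a set"
  assumes P: "\<And>j. P j \<in> events"
    and Cauchy: "\<And>e. e > 0 \<Longrightarrow> \<exists>J. \<forall>j\<ge>J. \<forall>l\<ge>J. prob (sym_diff (P j) (P l)) < e"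
  shows "\<exists>C\<in>events. (\<lambda>j. prob (sym_diff (P j) C)) \<longlonglongrightarrow> 0"
proof -
  have "\<forall>i. \<exists>J. \<forall>j\<ge>J. \<forall>l\<ge>J. prob (sym_diff (P j) (P l)) < (1/2::real)^i"
    using Cauchy by simp
  then obtain J :: "nat \<Rightarrow> nat"
    where J: "\<And>i j l. j \<ge> J i \<Longrightarrow> l \<ge> J i \<Longrightarrow> prob (sym_diff (P j) (P l)) < (1/2)^i"
    by metis
  define t where "t i = (\<Sum>k\<le>i. J k)" for i
  have J_le_t: "J k \<le> t i" if "k \<le> i" for k i
    unfolding t_def using that by (intro member_le_sum) auto
  define C where "C = (\<Union>m. \<Inter>j. P (t (m + j)))"
  have C: "C \<in> events" unfolding C_def using P by (intro sets.countable_nat_UN sets.countable_INT') auto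
  have limit: "prob (sym_diff (P (t i)) C) \<le> 2 * (1/2)^i" for i
    unfolding C_def using P J J_le_t
    by (intro prob_sym_diff_liminf_le[of "\<lambda>i. P (t i)"]) (auto intro: less_imp_le)
  show ?thesis
  proof (intro bexI[OF _ C] LIMSEQ_I)
    fix e :: real assume e: "e > 0"
    obtain i where i: "(1/2::real)^i < e / 3"
      using real_arch_pow_inv[of "e/3" "1/2"] e by auto
    show "\<exists>J'. \<forall>j\<ge>J'. norm (prob (sym_diff (P j) C) - 0) < e"
    proof (intro exI[of _ "J i"] allI impI)
      fix j assume "j \<ge> J i"
      then have "prob (sym_diff (P j) (P (t i))) < (1/2)^i" using J J_le_t by blast
      moreover have "prob (sym_diff (P j) C) \<le> prob (sym_diff (P j) (P (t i))) + prob (sym_diff (P (t i)) C)"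
        using P C by (intro measure_sym_diff_triangle)
      ultimately show "norm (prob (sym_diff (P j) C) - 0) < e" using limit[of i] i by simp
    qed
  qed
qed

end

section \<open>Measure preserving group actions\<close>

locale mp_group_action =
  fixes G :: "('g, 'c) monoid_scheme" and M :: "'a measure" and f :: "'a \<Rightarrow> 'g \<Rightarrow> 'a"
  assumes group_G: "group G" and mp: "mp_action G M f"
begin

lemma inv_closed: "\<gamma> \<in> carrier G \<Longrightarrow> inv\<^bsub>G\<^esub> \<gamma> \<in> carrier G"
  using group_G by (simp add: group.inv_closed)

lemma act_closed: "x \<in> space M \<Longrightarrow> \<gamma> \<in> carrier G \<Longrightarrow> f x \<gamma> \<in> space M"
  using mp unfolding mp_action_def right_action_def by auto

lemma act_one: "x \<in> space M \<Longrightarrow> f x \<one>\<^bsub>G\<^esub> = x"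
  using mp unfolding mp_action_def right_action_def by auto

lemma act_inv:
  assumes "\<gamma> \<in> carrier G" "x \<in> space M"
  shows "f (f x \<gamma>) (inv\<^bsub>G\<^esub> \<gamma>) = x" "f (f x (inv\<^bsub>G\<^esub> \<gamma>)) \<gamma> = x"
  using assms mp group_G unfolding mp_action_def right_action_def
  by (simp_all add: group.inv_closed group.r_inv group.l_inv)

lemma act_measurable: "\<gamma> \<in> carrier G \<Longrightarrow> (\<lambda>x. f x \<gamma>) \<in> measurable M M"
  using mp unfolding mp_action_def by auto

lemma distr_act: "\<gamma> \<in> carrier G \<Longrightarrow> distr M M (\<lambda>x. f x \<gamma>) = M"
  using mp unfolding mp_action_def by auto

lemma measure_act_vimage:
  assumes "\<gamma> \<in> carrier G" "A \<in> sets M"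
  shows "measure M ((\<lambda>x. f x \<gamma>) -` A \<inter> space M) = measure M A"
proof -
  have "measure M A = measure (distr M M (\<lambda>x. f x \<gamma>)) A" using distr_act[OF assms(1)] by simp
  also have "\<dots> = measure M ((\<lambda>x. f x \<gamma>) -` A \<inter> space M)"
    using measure_distr[OF act_measurable] assms by simp
  finally show ?thesis by simp
qed

lemma AE_act:
  assumes "\<gamma> \<in> carrier G" "AE x in M. P x"
  shows "AE x in M. P (f x \<gamma>)"
proof -
  have "AE x in distr M M (\<lambda>x. f x \<gamma>). P x" by (subst distr_act[OF assms(1)]) (rule assms(2))
  then show ?thesis by (rule AE_distrD[OF act_measurable[OF assms(1)]])
qed

lemma set_act_eq_vimage:
  assumes "\<gamma> \<in> carrier G" "A \<subseteq> space M"
  shows "set_act f A \<gamma> = (\<lambda>x. f x (inv\<^bsub>G\<^esub> \<gamma>)) -` A \<inter> space M"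
proof (intro equalityI subsetI)
  fix x assume "x \<in> set_act f A \<gamma>"
  then show "x \<in> (\<lambda>x. f x (inv\<^bsub>G\<^esub> \<gamma>)) -` A \<inter> space M"
    using assms act_inv act_closed unfolding set_act_def by auto
next
  fix x assume x: "x \<in> (\<lambda>x. f x (inv\<^bsub>G\<^esub> \<gamma>)) -` A \<inter> space M"
  then have "f (f x (inv\<^bsub>G\<^esub> \<gamma>)) \<gamma> \<in> set_act f A \<gamma>" unfolding set_act_def by blast
  then show "x \<in> set_act f A \<gamma>" using act_inv assms x by simp
qed

lemma sets_set_act: "\<gamma> \<in> carrier G \<Longrightarrow> A \<in> sets M \<Longrightarrow> set_act f A \<gamma> \<in> sets M"
  using set_act_eq_vimage[OF _ sets.sets_into_space] measurable_sets[OF act_measurable]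
    inv_closed by simp

lemma measure_set_act: "\<gamma> \<in> carrier G \<Longrightarrow> A \<in> sets M \<Longrightarrow> measure M (set_act f A \<gamma>) = measure M A"
  using set_act_eq_vimage[OF _ sets.sets_into_space] measure_act_vimage inv_closed by simp

lemma set_act_one: "A \<subseteq> space M \<Longrightarrow> set_act f A \<one>\<^bsub>G\<^esub> = A"
  unfolding set_act_def using act_one by (simp add: subset_eq)

lemma set_act_sym_diff:
  assumes "\<gamma> \<in> carrier G" "P \<subseteq> space M" "Q \<subseteq> space M"
  shows "set_act f (sym_diff P Q) \<gamma> = sym_diff (set_act f P \<gamma>) (set_act f Q \<gamma>)"
  using assms set_act_eq_vimage[of \<gamma>] by (subst (1 2 3) set_act_eq_vimage) auto

end

section \<open>Factor maps onto a finite action from an almost invariant partition\<close>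

locale finite_target_actions =
  M: prob_space M + N: prob_space N + fM: mp_group_action G M f + gN: mp_group_action G N g
  for G :: "('g, 'c) monoid_scheme" and M :: "'a measure" and f :: "'a \<Rightarrow> 'g \<Rightarrow> 'a"
    and N :: "'b measure" and g :: "'b \<Rightarrow> 'g \<Rightarrow> 'b" +
  assumes countable_G: "countable (carrier G)"
    and finite_N: "finite (space N)" and sets_N: "sets N = Pow (space N)"
begin

lemma sum_singletons_N: "(\<Sum>y\<in>space N. measure N {y}) = 1"
proof -
  have "measure N (space N) = (\<Sum>y\<in>space N. measure N {y})"
    using finite_N sets_N by (intro measure_eq_sum_singleton) (auto simp: N.emeasure_finite)
  then show ?thesis using N.prob_space by simp
qed

lemma measure_singleton_act: "\<gamma> \<in> carrier G \<Longrightarrow> y \<in> space N \<Longrightarrow> measure N {g y \<gamma>} = measure N {y}"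
  using gN.measure_set_act[of \<gamma> "{y}"] sets_N by (simp add: set_act_def)

text \<open>Discarding the overlaps
  yields a partition of almost all of M, and labelling each part with its point is a factor map.\<close>
context
  fixes C :: "'b \<Rightarrow> 'a set"
  assumes C_sets: "\<And>y. y \<in> space N \<Longrightarrow> C y \<in> sets M"
    and C_measure: "\<And>y. y \<in> space N \<Longrightarrow> measure M (C y) = measure N {y}"
    and C_overlap: "\<And>y z. y \<in> space N \<Longrightarrow> z \<in> space N \<Longrightarrow> y \<noteq> z \<Longrightarrow> measure M (C y \<inter> C z) = 0"
    and C_equivariant: "\<And>y \<gamma>. y \<in> space N \<Longrightarrow> \<gamma> \<in> carrier G \<Longrightarrow>
       measure M (sym_diff (set_act f (C y) \<gamma>) (C (g y \<gamma>))) = 0"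
begin

definition part :: "'b \<Rightarrow> 'a set" where
  "part y = C y - (\<Union>z\<in>space N - {y}. C z)"

definition covered :: "'a set" where
  "covered = (\<Union>y\<in>space N. part y)"

lemma part_sets: "y \<in> space N \<Longrightarrow> part y \<in> sets M"
  unfolding part_def using C_sets finite_N by (intro sets.Diff sets.finite_UN) auto

lemma covered_sets: "covered \<in> sets M"
  unfolding covered_def using part_sets finite_N by (intro sets.finite_UN) auto

lemma part_sub: "part y \<subseteq> C y"
  unfolding part_def by blast

lemma part_disjoint: "y \<in> space N \<Longrightarrow> z \<in> space N \<Longrightarrow> y \<noteq> z \<Longrightarrow> part y \<inter> part z = {}"
  unfolding part_def by blast

lemma measure_part: assumes y: "y \<in> space N" shows "measure M (part y) = measure N {y}"
proof -
  let ?O = "\<Union>z\<in>space N - {y}. C z"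
  have "C y \<inter> ?O = (\<Union>z\<in>space N - {y}. C y \<inter> C z)" by blast
  then have "measure M (C y \<inter> ?O) = measure M (\<Union>z\<in>space N - {y}. C y \<inter> C z)" by simp
  also have "\<dots> \<le> (\<Sum>z\<in>space N - {y}. measure M (C y \<inter> C z))"
    using C_sets finite_N y by (intro measure_UNION_le) auto
  also have "\<dots> = 0" using C_overlap y by (intro sum.neutral) auto
  finally have "measure M (C y \<inter> ?O) = 0" by (simp add: measure_le_0_iff)
  moreover have "?O \<in> sets M" using C_sets finite_N by (intro sets.finite_UN) auto
  then have "measure M (part y) = measure M (C y) - measure M (C y \<inter> ?O)"
    unfolding part_def using C_sets[OF y] M.finite_measure_Diff' by blast
  ultimately show ?thesis using C_measure[OF y] by simp
qed

lemma uncovered_null: "measure M (space M - covered) = 0"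
proof -
  have "measure M covered = (\<Sum>y\<in>space N. measure M (part y))"
    unfolding covered_def using finite_N part_sets part_disjoint
    by (intro measure_finite_Union) (auto simp: disjoint_family_on_def M.emeasure_finite)
  also have "\<dots> = 1" using measure_part sum_singletons_N by simp
  finally show ?thesis using M.prob_compl covered_sets by simp
qed

definition default_label :: 'b where
  "default_label = (SOME y. y \<in> space N)"

definition label :: "'a \<Rightarrow> 'b" where
  "label x = (if x \<in> covered then (THE y. y \<in> space N \<and> x \<in> part y) else default_label)"

lemma default_label: "default_label \<in> space N"
  unfolding default_label_def using N.not_empty some_in_eq by blast

lemma label_part: assumes "y \<in> space N" "x \<in> part y" shows "label x = y"
proof -
  have "(THE y. y \<in> space N \<and> x \<in> part y) = y"
    using assms part_disjoint by (intro the_equality) blast+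
  then show ?thesis unfolding label_def covered_def using assms by auto
qed

lemma label_in: "label x \<in> space N"
proof (cases "x \<in> covered")
  case True
  then obtain y where "y \<in> space N" "x \<in> part y" unfolding covered_def by blast
  then show ?thesis using label_part by simp
qed (simp add: label_def default_label)

lemma label_vimage:
  assumes y: "y \<in> space N"
  shows "label -` {y} \<inter> space M = part y \<union> (if y = default_label then space M - covered else {})"
proof (intro equalityI subsetI)
  fix x assume x: "x \<in> label -` {y} \<inter> space M"
  show "x \<in> part y \<union> (if y = default_label then space M - covered else {})"
  proof (cases "x \<in> covered")
    case True
    then obtain z where "z \<in> space N" "x \<in> part z" unfolding covered_def by blast
    then show ?thesis using label_part x by auto
  qed (use x in \<open>auto simp: label_def\<close>)
next
  fix x assume x: "x \<in> part y \<union> (if y = default_label then space M - covered else {})"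
  have "part y \<subseteq> space M" using part_sets[OF y] sets.sets_into_space by blast
  moreover have "label x = y" if "y = default_label" "x \<notin> covered"
    using that by (simp add: label_def)
  ultimately show "x \<in> label -` {y} \<inter> space M"
    using x label_part[OF y] by (auto split: if_splits)
qed

lemma AE_covered: "AE x in M. x \<in> covered"
  using M.prob_eq_0[of "space M - covered"] uncovered_null covered_sets by (auto elim: AE_mp)

lemma label_measurable: "label \<in> measurable M N"
proof -
  have "label -` {y} \<inter> space M \<in> sets M" if "y \<in> space N" for y
    using label_vimage[OF that] part_sets[OF that] covered_sets by auto
  then have "label \<in> measurable M (count_space (space N))"
    using finite_N label_in by (subst measurable_count_space_eq2) auto
  moreover have "measurable M N = measurable M (count_space (space N))"
    using sets_N by (intro measurable_cong_sets) auto
  ultimately show ?thesis by simp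
qed

lemma distr_label: "distr M N label = N"
proof (rule measure_eqI_finite[OF _ sets_N finite_N])
  show "sets (distr M N label) = Pow (space N)" using sets_N by simp
  fix y assume y: "y \<in> space N"
  have null: "space M - covered \<in> null_sets M"
    using uncovered_null covered_sets by (auto simp: null_sets_def M.emeasure_eq_measure)
  have "emeasure (distr M N label) {y} = emeasure M (label -` {y} \<inter> space M)"
    using label_measurable y sets_N by (intro emeasure_distr) auto
  also have "\<dots> = measure M (part y)"
    using label_vimage[OF y] part_sets[OF y] null
    by (simp add: M.emeasure_eq_measure measure_Un_null_set)
  also have "\<dots> = emeasure N {y}" using measure_part[OF y] by (simp add: N.emeasure_eq_measure)
  finally show "emeasure (distr M N label) {y} = emeasure N {y}" .
qed

text \<open>Almost every x lies in a part whose image under \<gamma> is (almost) the part of the moved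
  point, so the label is equivariant almost everywhere.\<close>
lemma label_equivariant:
  assumes \<gamma>: "\<gamma> \<in> carrier G"
  shows "AE x in M. label (f x \<gamma>) = g (label x) \<gamma>"
proof -
  let ?S = "\<lambda>y. sym_diff (set_act f (C y) \<gamma>) (C (g y \<gamma>))"
  have "AE z in M. z \<notin> ?S y" if y: "y \<in> space N" for y
  proof -
    have "?S y \<in> sets M"
      using fM.sets_set_act[OF \<gamma>] C_sets y gN.act_closed[OF y \<gamma>] by blast
    then show ?thesis using M.prob_eq_0 C_equivariant[OF y \<gamma>] by blast
  qed
  then have "AE z in M. \<forall>y\<in>space N. z \<notin> ?S y"
    using finite_N by (rule AE_finite_allI[rotated])
  with AE_covered have "AE z in M. z \<in> covered \<and> (\<forall>y\<in>space N. z \<notin> ?S y)"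
    by eventually_elim simp
  then have "AE x in M. f x \<gamma> \<in> covered \<and> (\<forall>y\<in>space N. f x \<gamma> \<notin> ?S y)"
    by (rule fM.AE_act[OF \<gamma>])
  with AE_covered show ?thesis
  proof eventually_elim
    case (elim x)
    then obtain y z where y: "y \<in> space N" "x \<in> part y" and z: "z \<in> space N" "f x \<gamma> \<in> part z"
      unfolding covered_def by blast
    have "f x \<gamma> \<in> set_act f (C y) \<gamma>" using y part_sub unfolding set_act_def by blast
    moreover have "f x \<gamma> \<notin> ?S y" using elim y(1) by blast
    ultimately have "f x \<gamma> \<in> C (g y \<gamma>)" by blast
    then have "z = g y \<gamma>" using z gN.act_closed[OF y(1) \<gamma>] unfolding part_def by blast
    then show ?case using label_part y z by simp
  qed
qed

lemma is_factor_label: "is_factor G M f N g"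
  unfolding is_factor_def
  using label_measurable distr_label label_equivariant countable_G
  by (intro exI[of _ label] conjI AE_ball_countable') auto

end

end

section \<open>Strong ergodicity and doubly indexed families\<close>

text \<open>If the events A m k become almost invariant as m, k \<rightarrow> \<infinity> jointly, strong ergodicity
  forces them to become trivial: otherwise a diagonal sequence would be almost invariant but
  not trivial.\<close>
lemma strongly_ergodic_double_seq:
  fixes A :: "nat \<Rightarrow> nat \<Rightarrow> 'a set"
  assumes se: "strongly_ergodic G M f"
    and A: "\<And>m k. A m k \<in> sets M"
    and almost_inv: "\<And>\<gamma> e. \<gamma> \<in> carrier G \<Longrightarrow> e > 0 \<Longrightarrow>
       \<exists>K. \<forall>m k. K \<le> m \<longrightarrow> K \<le> k \<longrightarrow> measure M (A m k - set_act f (A m k) \<gamma>) < e"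
    and e: "e > 0"
  shows "\<exists>K. \<forall>m k. K \<le> m \<longrightarrow> K \<le> k \<longrightarrow> measure M (A m k) * (1 - measure M (A m k)) < e"
proof (rule ccontr)
  assume "\<not> ?thesis"
  then obtain p q where pq: "\<And>i. i \<le> p i" "\<And>i. i \<le> q i"
    and large: "\<And>i. \<not> measure M (A (p i) (q i)) * (1 - measure M (A (p i) (q i))) < e"
    by (metis not_le)
  define Z where "Z i = A (p i) (q i)" for i
  have "almost_invariant G M f Z"
    unfolding almost_invariant_def
  proof (intro conjI allI ballI)
    show "Z i \<in> sets M" for i using A unfolding Z_def by simp
    fix \<gamma> assume \<gamma>: "\<gamma> \<in> carrier G"
    show "(\<lambda>i. measure M (Z i - set_act f (Z i) \<gamma>)) \<longlonglongrightarrow> 0"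
    proof (rule LIMSEQ_I)
      fix r :: real assume "r > 0"
      then obtain K where K: "\<And>m k. K \<le> m \<Longrightarrow> K \<le> k \<Longrightarrow> measure M (A m k - set_act f (A m k) \<gamma>) < r"
        using almost_inv[OF \<gamma>] by blast
      have "norm (measure M (Z i - set_act f (Z i) \<gamma>) - 0) < r" if "K \<le> i" for i
        unfolding Z_def using K pq that le_trans by (metis diff_zero real_norm_def abs_of_nonneg measure_nonneg)
      then show "\<exists>K. \<forall>i\<ge>K. norm (measure M (Z i - set_act f (Z i) \<gamma>) - 0) < r" by blast
    qed
  qed
  then have "(\<lambda>i. measure M (Z i) * (1 - measure M (Z i))) \<longlonglongrightarrow> 0"
    using se unfolding strongly_ergodic_def trivial_seq_def by blast
  from LIMSEQ_D[OF this e] obtain i where "norm (measure M (Z i) * (1 - measure M (Z i))) < e"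
    by auto
  with large[of i] show False unfolding Z_def by simp
qed

text \<open>For a \<in> [0,1], whichever of a and 1 - a is at most 1/2 is bounded by 2 a (1 - a); so a
  trivial sequence of events is eventually small or eventually large.\<close>
lemma le_twice_product:
  fixes a :: real
  assumes "0 \<le> a" "a \<le> 1"
  shows "a \<le> 1/2 \<Longrightarrow> a \<le> 2 * (a * (1 - a))" and "1/2 \<le> a \<Longrightarrow> 1 - a \<le> 2 * (a * (1 - a))"
proof -
  assume "a \<le> 1/2"
  then have "a * (1 - 2 * (1 - a)) \<le> 0" using assms by (intro mult_nonneg_nonpos) auto
  then show "a \<le> 2 * (a * (1 - a))" by (simp add: algebra_simps)
next
  assume "1/2 \<le> a"
  then have "(1 - a) * (1 - 2 * a) \<le> 0" using assms by (intro mult_nonneg_nonpos) auto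
  then show "1 - a \<le> 2 * (a * (1 - a))" by (simp add: algebra_simps)
qed

section \<open>Weak containment of a finite action in a strongly ergodic action\<close>

locale weak_containment_setting = finite_target_actions G M f N g
  for G :: "('g, 'c) monoid_scheme" and M :: "'a measure" and f :: "'a \<Rightarrow> 'g \<Rightarrow> 'a"
    and N :: "'b measure" and g :: "'b \<Rightarrow> 'g \<Rightarrow> 'b" +
  assumes strongly_ergodic: "strongly_ergodic G M f"
    and weakly_contains: "weakly_contains G M f N g"
begin

text \<open>An exhaustion of the countable group by the finite windows (each containing the unit)
  and a tolerance tending to zero; stage m of the approximation uses window m and tolerance eps m.\<close>
definition window :: "nat \<Rightarrow> 'g set" where
  "window m = from_nat_into (carrier G) ` {..m} \<union> {\<one>\<^bsub>G\<^esub>}"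

definition eps :: "nat \<Rightarrow> real" where
  "eps m = inverse (real (Suc m))"

lemma window_props: "finite (window m)" "window m \<subseteq> carrier G" "\<one>\<^bsub>G\<^esub> \<in> window m"
proof -
  have "\<one>\<^bsub>G\<^esub> \<in> carrier G" using fM.group_G by (simp add: group.is_monoid monoid.one_closed)
  then show "finite (window m)" "window m \<subseteq> carrier G" "\<one>\<^bsub>G\<^esub> \<in> window m"
    unfolding window_def using from_nat_into[of "carrier G"] by auto
qed

lemma eventually_in_window:
  assumes "\<gamma> \<in> carrier G" shows "eventually (\<lambda>m. \<gamma> \<in> window m) sequentially"
proof -
  obtain i where "from_nat_into (carrier G) i = \<gamma>"
    using from_nat_into_surj[OF countable_G assms] by blast
  then show ?thesis unfolding window_def eventually_sequentially by auto
qed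

lemma eps_pos: "eps m > 0"
  unfolding eps_def by simp

lemma eps_tendsto: "eps \<longlonglongrightarrow> 0"
  unfolding eps_def by (rule LIMSEQ_inverse_real_of_nat)

definition approximates :: "('b \<Rightarrow> 'a set) \<Rightarrow> nat \<Rightarrow> bool" where
  "approximates B m \<longleftrightarrow> (\<forall>y\<in>space N. B y \<in> sets M) \<and>
     (\<forall>y\<in>space N. \<forall>z\<in>space N. \<forall>\<gamma>\<in>window m.
        \<bar>measure M (set_act f (B y) \<gamma> \<inter> B z) - measure N (set_act g {y} \<gamma> \<inter> {z})\<bar> < eps m)"

lemma approximates_exists: "\<exists>B. approximates B m"
proof -
  let ?n = "card (space N)"
  obtain e where e: "bij_betw e {0..<?n} (space N)"
    using ex_bij_betw_nat_finite[OF finite_N] by blast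
  have "\<exists>B :: nat \<Rightarrow> 'a set. (\<forall>i<?n. B i \<in> sets M) \<and>
           (\<forall>i<?n. \<forall>j<?n. \<forall>\<gamma>\<in>window m.
              \<bar>measure M (set_act f (B i) \<gamma> \<inter> B j) - measure N (set_act g {e i} \<gamma> \<inter> {e j})\<bar> < eps m)"
  proof -
    have "\<forall>i<?n. {e i} \<in> sets N" using e sets_N bij_betwE by fastforce
    then show ?thesis
      using weakly_contains[unfolded weakly_contains_def, rule_format, of ?n "\<lambda>i. {e i}" "window m" "eps m"]
        window_props eps_pos by blast
  qed
  then obtain B where B: "\<forall>i<?n. B i \<in> sets M"
    "\<forall>i<?n. \<forall>j<?n. \<forall>\<gamma>\<in>window m.
       \<bar>measure M (set_act f (B i) \<gamma> \<inter> B j) - measure N (set_act g {e i} \<gamma> \<inter> {e j})\<bar> < eps m"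
    by blast
  define e' where "e' = inv_into {0..<?n} e"
  have e': "y \<in> space N \<Longrightarrow> e' y < ?n \<and> e (e' y) = y" for y
    unfolding e'_def using e
    by (metis atLeastLessThan_iff bij_betw_def f_inv_into_f inv_into_into)
  show ?thesis
    unfolding approximates_def
    by (intro exI[of _ "\<lambda>y. B (e' y)"] conjI ballI) (use B e' in metis)+
qed

definition approx :: "nat \<Rightarrow> 'b \<Rightarrow> 'a set" where
  "approx m = (SOME B. approximates B m)"

lemma approximates_approx: "approximates (approx m) m"
  unfolding approx_def using approximates_exists someI_ex by metis

lemma approx_sets: "y \<in> space N \<Longrightarrow> approx m y \<in> sets M"
  using approximates_approx unfolding approximates_def by blast

lemma approx_subset: "y \<in> space N \<Longrightarrow> approx m y \<subseteq> space M"
  using approx_sets sets.sets_into_space by blast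

lemma approx_correlation:
  assumes y: "y \<in> space N" and z: "z \<in> space N" and \<gamma>: "\<gamma> \<in> window m"
  shows "\<bar>measure M (set_act f (approx m y) \<gamma> \<inter> approx m z) -
    (if g y \<gamma> = z then measure N {y} else 0)\<bar> < eps m"
proof -
  have "\<gamma> \<in> carrier G" using \<gamma> window_props by blast
  then have "measure N (set_act g {y} \<gamma> \<inter> {z}) = (if g y \<gamma> = z then measure N {y} else 0)"
    using measure_singleton_act y by (auto simp: set_act_def)
  moreover have "\<bar>measure M (set_act f (approx m y) \<gamma> \<inter> approx m z) -
      measure N (set_act g {y} \<gamma> \<inter> {z})\<bar> < eps m"
    using approximates_approx y z \<gamma> unfolding approximates_def by blast
  ultimately show ?thesis by simp
qed

lemma approx_unit: "y \<in> space N \<Longrightarrow> set_act f (approx m y) \<one>\<^bsub>G\<^esub> = approx m y"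
  using fM.set_act_one approx_subset by blast

lemma approx_measure: "y \<in> space N \<Longrightarrow> \<bar>measure M (approx m y) - measure N {y}\<bar> < eps m"
  using approx_correlation[OF _ _ window_props(3), of y y] gN.act_one approx_unit by simp

lemma approx_overlap:
  "y \<in> space N \<Longrightarrow> z \<in> space N \<Longrightarrow> y \<noteq> z \<Longrightarrow> measure M (approx m y \<inter> approx m z) < eps m"
  using approx_correlation[OF _ _ window_props(3), of y z] gN.act_one approx_unit by simp

lemma approx_shift:
  assumes y: "y \<in> space N" and \<gamma>: "\<gamma> \<in> window m"
  shows "measure M (sym_diff (set_act f (approx m y) \<gamma>) (approx m (g y \<gamma>))) < 4 * eps m"
proof -
  have \<gamma>G: "\<gamma> \<in> carrier G" using \<gamma> window_props by blast
  have gy: "g y \<gamma> \<in> space N" using gN.act_closed y \<gamma>G by blast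
  have sets: "set_act f (approx m y) \<gamma> \<in> sets M" "approx m (g y \<gamma>) \<in> sets M"
    using fM.sets_set_act \<gamma>G approx_sets y gy by auto
  have "measure M (set_act f (approx m y) \<gamma>) = measure M (approx m y)"
    using fM.measure_set_act \<gamma>G approx_sets y by blast
  moreover have "\<bar>measure M (approx m y) - measure N {y}\<bar> < eps m"
    using approx_measure y by blast
  moreover have "\<bar>measure M (approx m (g y \<gamma>)) - measure N {y}\<bar> < eps m"
    using approx_measure[OF gy] measure_singleton_act[OF \<gamma>G y] by simp
  moreover have "\<bar>measure M (set_act f (approx m y) \<gamma> \<inter> approx m (g y \<gamma>)) - measure N {y}\<bar> < eps m"
    using approx_correlation[OF y gy \<gamma>] by simp
  ultimately show ?thesis using M.measure_sym_diff[OF sets] by linarith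
qed

lemma approx_overlap_total:
  assumes y: "y \<in> space N"
  shows "(\<Sum>z\<in>space N - {y}. measure M (approx m y \<inter> approx m z)) \<le> real (card (space N)) * eps m"
proof -
  have "(\<Sum>z\<in>space N - {y}. measure M (approx m y \<inter> approx m z)) \<le> real (card (space N - {y})) * eps m"
    using approx_overlap y by (intro sum_bounded_above) (auto intro: less_imp_le)
  also have "\<dots> \<le> real (card (space N)) * eps m"
    using eps_pos[of m] finite_N by (intro mult_right_mono) (auto simp: card_mono less_imp_le)
  finally show ?thesis .
qed

definition cover :: "nat \<Rightarrow> 'a set" where
  "cover m = (\<Union>y\<in>space N. approx m y)"

lemma cover_sets: "cover m \<in> sets M"
  unfolding cover_def using finite_N approx_sets by (intro sets.finite_UN) auto

text \<open>Since their masses add up to almost 1 and they almost do not overlap, the approximants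
  almost cover M.\<close>
lemma cover_measure:
  "1 - measure M (cover m) \<le> (real (card (space N)) + real (card (space N)) ^ 2) * eps m"
proof -
  let ?n = "real (card (space N))"
  have "(\<Sum>y\<in>space N. measure M (approx m y)) \<le> measure M (cover m)
           + (\<Sum>y\<in>space N. \<Sum>z\<in>space N - {y}. measure M (approx m y \<inter> approx m z))"
    unfolding cover_def using finite_N approx_sets by (intro M.sum_prob_le_Union_plus_overlaps) auto
  moreover have "(\<Sum>y\<in>space N. \<Sum>z\<in>space N - {y}. measure M (approx m y \<inter> approx m z)) \<le> ?n * (?n * eps m)"
    using sum_bounded_above[of "space N", OF approx_overlap_total] by simp
  moreover have "(\<Sum>y\<in>space N. measure N {y} - eps m) \<le> (\<Sum>y\<in>space N. measure M (approx m y))"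
    using approx_measure by (intro sum_mono) (smt (verit))
  moreover have "(\<Sum>y\<in>space N. measure N {y} - eps m) = 1 - ?n * eps m"
    using sum_singletons_N by (simp add: sum_subtractf)
  ultimately show ?thesis by (simp add: algebra_simps power2_eq_square)
qed

text \<open>Points on which stages m and k give the same label.  These events become almost
  invariant, hence (by strong ergodicity) trivial, as m, k \<rightarrow> \<infinity>.\<close>
definition agree :: "nat \<Rightarrow> nat \<Rightarrow> 'a set" where
  "agree m k = (\<Union>y\<in>space N. approx m y \<inter> approx k y)"

lemma agree_sets: "agree m k \<in> sets M"
  unfolding agree_def using finite_N approx_sets by (intro sets.finite_UN) auto

lemma agree_subset: "agree m k \<subseteq> space M"
  using agree_sets sets.sets_into_space by blast

lemma agree_sym: "agree m k = agree k m"
  unfolding agree_def by blast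

text \<open>A point of agree m k moved out of it by \<gamma> lies where one of the stages fails to be
  equivariant at \<gamma>; approx_shift bounds these places.\<close>
lemma agree_shift_bound:
  assumes "\<gamma> \<in> window m" "\<gamma> \<in> window k"
  shows "measure M (agree m k - set_act f (agree m k) \<gamma>)
     \<le> real (card (space N)) * (4 * eps m) + real (card (space N)) * (4 * eps k)"
proof -
  have \<gamma>: "\<gamma> \<in> carrier G" using assms window_props by blast
  let ?D = "\<lambda>m y. sym_diff (set_act f (approx m y) \<gamma>) (approx m (g y \<gamma>))"
  have D: "y \<in> space N \<Longrightarrow> ?D m y \<in> sets M" for m y
    using fM.sets_set_act[OF \<gamma>] approx_sets gN.act_closed[OF _ \<gamma>] by blast
  have "agree m k - set_act f (agree m k) \<gamma> \<subseteq> (\<Union>y\<in>space N. ?D m y \<union> ?D k y)"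
  proof
    fix x assume x: "x \<in> agree m k - set_act f (agree m k) \<gamma>"
    then obtain z where z: "z \<in> space N" "x \<in> approx m z" "x \<in> approx k z" unfolding agree_def by blast
    define y where "y = g z (inv\<^bsub>G\<^esub> \<gamma>)"
    have y: "y \<in> space N" "g y \<gamma> = z"
      unfolding y_def using gN.act_closed gN.inv_closed \<gamma> z gN.act_inv by auto
    have "\<not> (x \<in> set_act f (approx m y) \<gamma> \<and> x \<in> set_act f (approx k y) \<gamma>)"
    proof
      assume "x \<in> set_act f (approx m y) \<gamma> \<and> x \<in> set_act f (approx k y) \<gamma>"
      then have "f x (inv\<^bsub>G\<^esub> \<gamma>) \<in> agree m k" "x \<in> space M"
        unfolding fM.set_act_eq_vimage[OF \<gamma> approx_subset[OF y(1)]] agree_def using y by auto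
      then show False
        using x unfolding fM.set_act_eq_vimage[OF \<gamma> agree_subset] by auto
    qed
    then show "x \<in> (\<Union>y\<in>space N. ?D m y \<union> ?D k y)" using y z by blast
  qed
  then have "measure M (agree m k - set_act f (agree m k) \<gamma>) \<le> measure M (\<Union>y\<in>space N. ?D m y \<union> ?D k y)"
    using D finite_N by (intro M.finite_measure_mono) auto
  also have "\<dots> \<le> (\<Sum>y\<in>space N. measure M (?D m y \<union> ?D k y))"
    using D finite_N by (intro measure_UNION_le) auto
  also have "\<dots> \<le> (\<Sum>y\<in>space N. 4 * eps m + 4 * eps k)"
  proof (rule sum_mono)
    fix y assume y: "y \<in> space N"
    have "measure M (?D m y \<union> ?D k y) \<le> measure M (?D m y) + measure M (?D k y)"
      using D y by (intro measure_Un_le) auto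
    then show "measure M (?D m y \<union> ?D k y) \<le> 4 * eps m + 4 * eps k"
      using approx_shift[OF y assms(1)] approx_shift[OF y assms(2)] by linarith
  qed
  also have "\<dots> = real (card (space N)) * (4 * eps m) + real (card (space N)) * (4 * eps k)"
    by (simp add: algebra_simps)
  finally show ?thesis .
qed

lemma agree_almost_invariant:
  assumes \<gamma>: "\<gamma> \<in> carrier G" and e: "e > 0"
  shows "\<exists>K. \<forall>m k. K \<le> m \<longrightarrow> K \<le> k \<longrightarrow> measure M (agree m k - set_act f (agree m k) \<gamma>) < e"
proof -
  let ?n = "real (card (space N))"
  have "(\<lambda>m. ?n * (4 * eps m)) \<longlonglongrightarrow> ?n * (4 * 0)"
    by (intro tendsto_intros eps_tendsto)
  then have "eventually (\<lambda>m. ?n * (4 * eps m) < e / 2) sequentially"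
    using e by (intro order_tendstoD(2)) auto
  then have "eventually (\<lambda>m. \<gamma> \<in> window m \<and> ?n * (4 * eps m) < e / 2) sequentially"
    using eventually_in_window[OF \<gamma>] by (simp add: eventually_conj_iff)
  then obtain K where K: "\<And>m. K \<le> m \<Longrightarrow> \<gamma> \<in> window m \<and> ?n * (4 * eps m) < e / 2"
    unfolding eventually_sequentially by blast
  have "measure M (agree m k - set_act f (agree m k) \<gamma>) < e" if "K \<le> m" "K \<le> k" for m k
    using agree_shift_bound[of \<gamma> m k] K[OF that(1)] K[OF that(2)] by linarith
  then show ?thesis by blast
qed

lemma agree_trivial:
  "e > 0 \<Longrightarrow> \<exists>K. \<forall>m k. K \<le> m \<longrightarrow> K \<le> k \<longrightarrow> measure M (agree m k) * (1 - measure M (agree m k)) < e"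
  using strongly_ergodic agree_sets agree_almost_invariant by (rule strongly_ergodic_double_seq)

lemma agree_trivial_along:
  assumes p: "filterlim p at_top sequentially" and q: "filterlim q at_top sequentially"
  shows "(\<lambda>i. measure M (agree (p i) (q i)) * (1 - measure M (agree (p i) (q i)))) \<longlonglongrightarrow> 0"
proof (rule tendstoI)
  fix e :: real assume "e > 0"
  then obtain K where K: "\<And>m k. K \<le> m \<Longrightarrow> K \<le> k \<Longrightarrow> measure M (agree m k) * (1 - measure M (agree m k)) < e"
    using agree_trivial by blast
  have "eventually (\<lambda>i. K \<le> p i \<and> K \<le> q i) sequentially"
    using p q unfolding filterlim_at_top by (simp add: eventually_conj_iff)
  then show "eventually (\<lambda>i. dist (measure M (agree (p i) (q i)) * (1 - measure M (agree (p i) (q i)))) 0 < e) sequentially"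
  proof eventually_elim
    case (elim i)
    then show ?case using K[of "p i" "q i"] M.prob_le_1[of "agree (p i) (q i)"] by (simp add: dist_real_def)
  qed
qed

text \<open>Pigeonhole: a point covered at card N + 1 stages must get the same label at two of them.
  Hence these stages cannot be both almost covering and pairwise almost disagreeing.\<close>
lemma pigeonhole_stages:
  fixes h :: "nat \<Rightarrow> nat"
  shows "1 \<le> (\<Sum>j\<le>card (space N). 1 - measure M (cover (h j)))
     + (\<Sum>j\<le>card (space N). \<Sum>l\<in>{..card (space N)} - {j}. measure M (agree (h j) (h l)))"
proof -
  let ?n = "card (space N)"
  let ?A = "\<Union>j\<le>?n. space M - cover (h j)"
  let ?B = "\<Union>j\<le>?n. \<Union>l\<in>{..?n} - {j}. agree (h j) (h l)"
  have A: "?A \<in> sets M" using cover_sets by (intro sets.finite_UN) auto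
  have B: "?B \<in> sets M" using agree_sets by (intro sets.finite_UN) auto
  have "space M \<subseteq> ?A \<union> ?B"
  proof
    fix x assume x: "x \<in> space M"
    show "x \<in> ?A \<union> ?B"
    proof (cases "\<exists>j\<le>?n. x \<notin> cover (h j)")
      case True then show ?thesis using x by blast
    next
      case False
      then have "\<forall>j\<in>{..?n}. \<exists>y\<in>space N. x \<in> approx (h j) y" unfolding cover_def by auto
      then obtain lab where lab: "\<And>j. j \<in> {..?n} \<Longrightarrow> lab j \<in> space N \<and> x \<in> approx (h j) (lab j)"
        by metis
      have "card (lab ` {..?n}) \<le> ?n" using lab finite_N by (intro card_mono) auto
      then have "\<not> inj_on lab {..?n}" by (intro pigeonhole) simp
      then obtain j l where jl: "j \<in> {..?n}" "l \<in> {..?n}" "j \<noteq> l" "lab j = lab l"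
        unfolding inj_on_def by auto
      then have "x \<in> agree (h j) (h l)" unfolding agree_def using lab[of j] lab[of l] by auto
      then show ?thesis using jl by blast
    qed
  qed
  then have "measure M (space M) \<le> measure M (?A \<union> ?B)"
    using A B by (intro M.finite_measure_mono) auto
  then have "1 \<le> measure M (?A \<union> ?B)" by (simp add: M.prob_space)
  also have "\<dots> \<le> measure M ?A + measure M ?B" using A B by (intro measure_Un_le)
  also have "measure M ?A \<le> (\<Sum>j\<le>?n. measure M (space M - cover (h j)))"
    using cover_sets by (intro measure_UNION_le) auto
  also have "(\<Sum>j\<le>?n. measure M (space M - cover (h j))) = (\<Sum>j\<le>?n. 1 - measure M (cover (h j)))"
    using M.prob_compl cover_sets by simp
  also have "measure M ?B \<le> (\<Sum>j\<le>?n. measure M (\<Union>l\<in>{..?n} - {j}. agree (h j) (h l)))"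
    using agree_sets by (intro measure_UNION_le) auto
  also have "\<dots> \<le> (\<Sum>j\<le>?n. \<Sum>l\<in>{..?n} - {j}. measure M (agree (h j) (h l)))"
    using agree_sets by (intro sum_mono measure_UNION_le) auto
  finally show ?thesis by simp
qed

lemma approx_sym_diff_le_disagreement:
  assumes y: "y \<in> space N"
  shows "measure M (sym_diff (approx m y) (approx k y))
    \<le> (1 - measure M (agree m k)) + real (card (space N)) * eps m + real (card (space N)) * eps k"
proof -
  let ?n = "real (card (space N))"
  let ?O = "\<lambda>m. \<Union>z\<in>space N - {y}. approx m y \<inter> approx m z"
  have O: "?O m \<in> sets M" for m using finite_N approx_sets y by (intro sets.finite_UN) auto
  have disagree: "space M - agree m k \<in> sets M" using agree_sets by blast
  have "sym_diff (approx m y) (approx k y) \<subseteq> (space M - agree m k) \<union> ?O m \<union> ?O k"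
    using approx_subset[OF y] unfolding agree_def by blast
  then have "measure M (sym_diff (approx m y) (approx k y)) \<le> measure M ((space M - agree m k) \<union> ?O m \<union> ?O k)"
    using O disagree by (intro M.finite_measure_mono) auto
  also have "\<dots> \<le> measure M (space M - agree m k) + measure M (?O m) + measure M (?O k)"
    using O disagree measure_Un_le[of "(space M - agree m k) \<union> ?O m" M "?O k"]
      measure_Un_le[of "space M - agree m k" M "?O m"] by auto
  also have "measure M (space M - agree m k) = 1 - measure M (agree m k)"
    using M.prob_compl agree_sets by simp
  finally have "measure M (sym_diff (approx m y) (approx k y))
    \<le> 1 - measure M (agree m k) + measure M (?O m) + measure M (?O k)" .
  moreover have O_le: "measure M (?O m) \<le> ?n * eps m" for m
  proof -
    have "measure M (?O m) \<le> (\<Sum>z\<in>space N - {y}. measure M (approx m y \<inter> approx m z))"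
      using finite_N approx_sets y by (intro measure_UNION_le) auto
    then show ?thesis using approx_overlap_total[OF y, of m] by linarith
  qed
  ultimately show ?thesis using O_le[of m] O_le[of k] by linarith
qed

text \<open>Along a subsequence of stages that pairwise agree on less than half of M, every
  pigeonhole sum of pigeonhole_stages would tend to 0, which is absurd.\<close>
lemma no_disagreeing_subsequence:
  fixes s :: "nat \<Rightarrow> nat"
  assumes s: "strict_mono s" and small: "\<And>j l. j \<noteq> l \<Longrightarrow> measure M (agree (s j) (s l)) < 1/2"
  shows False
proof -
  let ?n = "card (space N)"
  define X where "X K = (\<Sum>j\<le>?n. 1 - measure M (cover (s (K + j))))
     + (\<Sum>j\<le>?n. \<Sum>l\<in>{..?n} - {j}. measure M (agree (s (K + j)) (s (K + l))))" for K
  have stage: "filterlim (\<lambda>K. s (K + j)) at_top sequentially" for j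
    using filterlim_compose[OF filterlim_subseq[OF s] filterlim_add_const_nat_at_top] .
  have eps_stage: "(\<lambda>K. eps (s (K + j))) \<longlonglongrightarrow> 0" for j
    using filterlim_compose[OF eps_tendsto stage] .
  have uncovered: "(\<lambda>K. 1 - measure M (cover (s (K + j)))) \<longlonglongrightarrow> 0" for j
  proof (rule Lim_null_comparison)
    let ?c = "real ?n + real ?n ^ 2"
    have "norm (1 - measure M (cover m)) \<le> ?c * eps m" for m
      using cover_measure[of m] M.prob_le_1[of "cover m"] by simp
    then show "eventually (\<lambda>K. norm (1 - measure M (cover (s (K + j)))) \<le> ?c * eps (s (K + j))) sequentially"
      by simp
    show "(\<lambda>K. ?c * eps (s (K + j))) \<longlonglongrightarrow> 0"
      using eps_stage by (rule tendsto_mult_right_zero)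
  qed
  have disagreeing: "(\<lambda>K. measure M (agree (s (K + j)) (s (K + l)))) \<longlonglongrightarrow> 0" if "j \<noteq> l" for j l
  proof (rule Lim_null_comparison)
    let ?a = "\<lambda>K. measure M (agree (s (K + j)) (s (K + l)))"
    have "?a K \<le> 2 * (?a K * (1 - ?a K))" for K
      using le_twice_product(1)[of "?a K"] small[of "K + j" "K + l"] that M.prob_le_1 by simp
    then show "eventually (\<lambda>K. norm (?a K) \<le> 2 * (?a K * (1 - ?a K))) sequentially"
      by (intro always_eventually) simp
    show "(\<lambda>K. 2 * (?a K * (1 - ?a K))) \<longlonglongrightarrow> 0"
      using agree_trivial_along[OF stage stage] by (rule tendsto_mult_right_zero)
  qed
  have "X \<longlonglongrightarrow> 0"
    unfolding X_def using uncovered disagreeing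
    by (intro tendsto_add_zero tendsto_null_sum) auto
  moreover have "1 \<le> X K" for K
    unfolding X_def using pigeonhole_stages[of "\<lambda>j. s (K + j)"] .
  ultimately have "1 \<le> (0::real)" by (intro LIMSEQ_le_const) auto
  then show False by simp
qed

text \<open>Along a subsequence of stages that pairwise agree on at least half of M, strong
  ergodicity forces almost full agreement, so the approximants of each y form a Cauchy sequence.\<close>
lemma agreeing_subsequence_Cauchy:
  fixes s :: "nat \<Rightarrow> nat"
  assumes s: "strict_mono s" and large: "\<And>j l. j \<noteq> l \<Longrightarrow> 1/2 \<le> measure M (agree (s j) (s l))"
    and y: "y \<in> space N" and e: "e > 0"
  shows "\<exists>J. \<forall>j\<ge>J. \<forall>l\<ge>J. measure M (sym_diff (approx (s j) y) (approx (s l) y)) < e"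
proof -
  let ?n = "real (card (space N))"
  obtain K1 where K1: "\<And>m k. K1 \<le> m \<Longrightarrow> K1 \<le> k \<Longrightarrow> measure M (agree m k) * (1 - measure M (agree m k)) < e / 4"
    using agree_trivial[of "e / 4"] e by auto
  have "(\<lambda>m. ?n * eps m) \<longlonglongrightarrow> ?n * 0" by (intro tendsto_intros eps_tendsto)
  then have "eventually (\<lambda>m. ?n * eps m < e / 4) sequentially"
    using e by (intro order_tendstoD(2)) auto
  then obtain K2 where K2: "\<And>m. K2 \<le> m \<Longrightarrow> ?n * eps m < e / 4"
    unfolding eventually_sequentially by blast
  have "measure M (sym_diff (approx (s j) y) (approx (s l) y)) < e"
    if jl: "max K1 K2 \<le> j" "max K1 K2 \<le> l" for j l
  proof (cases "j = l")
    case False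
    let ?a = "measure M (agree (s j) (s l))"
    have "max K1 K2 \<le> s j" "max K1 K2 \<le> s l" using jl seq_suble[OF s] le_trans by blast+
    then have "?a * (1 - ?a) < e / 4" "?n * eps (s j) < e / 4" "?n * eps (s l) < e / 4"
      using K1 K2 by auto
    moreover have "1 - ?a \<le> 2 * (?a * (1 - ?a))"
      using le_twice_product(2)[of ?a] large[OF False] M.prob_le_1 by simp
    ultimately show ?thesis using approx_sym_diff_le_disagreement[OF y, of "s j" "s l"] by linarith
  qed (use e in simp)
  then show ?thesis by blast
qed

text \<open>Infinite Ramsey theorem for the colouring of pairs of stages by whether they agree on at
  least half of M; the disagreeing alternative is impossible.\<close>
lemma Cauchy_subsequence:
  "\<exists>s :: nat \<Rightarrow> nat. strict_mono s \<and> (\<forall>y\<in>space N. \<forall>e>0. \<exists>J. \<forall>j\<ge>J. \<forall>l\<ge>J.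
      measure M (sym_diff (approx (s j) y) (approx (s l) y)) < e)"
proof -
  define colour where "colour X = (if \<exists>m k. X = {m, k} \<and> 1/2 \<le> measure M (agree m k) then 0 else 1::nat)"
    for X :: "nat set"
  have colour: "m \<noteq> k \<Longrightarrow> colour {m, k} = 0 \<longleftrightarrow> 1/2 \<le> measure M (agree m k)" for m k
    unfolding colour_def using agree_sym by (auto simp: doubleton_eq_iff)
  have "\<forall>x\<in>(UNIV::nat set). \<forall>y\<in>UNIV. x \<noteq> y \<longrightarrow> colour {x, y} < 2" unfolding colour_def by auto
  from Ramsey2[OF infinite_UNIV_nat this] obtain S t where
    S: "infinite S" "\<forall>x\<in>S. \<forall>y\<in>S. x \<noteq> y \<longrightarrow> colour {x, y} = t" by blast
  define s where "s = enumerate S"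
  have s: "strict_mono s" unfolding s_def using S(1) by (simp add: strict_mono_def enumerate_mono)
  have distinct: "j \<noteq> l \<Longrightarrow> s j \<noteq> s l" for j l
    using strict_mono_eq[OF s] by blast
  have in_S: "s j \<in> S" for j
    unfolding s_def using S(1) by (rule enumerate_in_set)
  have same_colour: "j \<noteq> l \<Longrightarrow> colour {s j, s l} = t" for j l
    using S(2) in_S distinct by blast
  show ?thesis
  proof (cases "t = 0")
    case True
    then have "1/2 \<le> measure M (agree (s j) (s l))" if "j \<noteq> l" for j l
      using same_colour[OF that] colour[OF distinct[OF that]] by simp
    then have "\<forall>y\<in>space N. \<forall>e>0. \<exists>J. \<forall>j\<ge>J. \<forall>l\<ge>J.
        measure M (sym_diff (approx (s j) y) (approx (s l) y)) < e"
      using agreeing_subsequence_Cauchy[OF s] by blast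
    with s show ?thesis by blast
  next
    case False
    then have "measure M (agree (s j) (s l)) < 1/2" if "j \<noteq> l" for j l
      using same_colour[OF that] colour[OF distinct[OF that]] by simp
    then show ?thesis using no_disagreeing_subsequence[OF s] by blast
  qed
qed

lemma limit_events:
  "\<exists>(s :: nat \<Rightarrow> nat) C. strict_mono s \<and> (\<forall>y\<in>space N. C y \<in> sets M \<and>
      (\<lambda>j. measure M (sym_diff (approx (s j) y) (C y))) \<longlonglongrightarrow> 0)"
proof -
  obtain s :: "nat \<Rightarrow> nat" where s: "strict_mono s"
    and Cauchy: "\<And>y e. y \<in> space N \<Longrightarrow> e > 0 \<Longrightarrow>
      \<exists>J. \<forall>j\<ge>J. \<forall>l\<ge>J. measure M (sym_diff (approx (s j) y) (approx (s l) y)) < e"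
    using Cauchy_subsequence by blast
  have "\<exists>C. C \<in> sets M \<and> (\<lambda>j. measure M (sym_diff (approx (s j) y) C)) \<longlonglongrightarrow> 0"
    if y: "y \<in> space N" for y
    using M.sym_diff_Cauchy_limit[OF approx_sets[OF y] Cauchy[OF y]] by blast
  then have "\<forall>y\<in>space N. \<exists>C. C \<in> sets M \<and> (\<lambda>j. measure M (sym_diff (approx (s j) y) C)) \<longlonglongrightarrow> 0"
    by blast
  from bchoice[OF this] s show ?thesis by blast
qed

context
  fixes s :: "nat \<Rightarrow> nat" and C :: "'b \<Rightarrow> 'a set"
  assumes s: "strict_mono s" and C_sets: "\<And>y. y \<in> space N \<Longrightarrow> C y \<in> sets M"
    and C_limit: "\<And>y. y \<in> space N \<Longrightarrow> (\<lambda>j. measure M (sym_diff (approx (s j) y) (C y))) \<longlonglongrightarrow> 0"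
begin

lemma eps_subseq: "(\<lambda>j. eps (s j)) \<longlonglongrightarrow> 0"
  using filterlim_compose[OF eps_tendsto filterlim_subseq[OF s]] .

lemma limit_measure:
  assumes y: "y \<in> space N" shows "measure M (C y) = measure N {y}"
proof (rule LIMSEQ_unique)
  show "(\<lambda>j. measure M (approx (s j) y)) \<longlonglongrightarrow> measure M (C y)"
  proof (rule LIM_zero_cancel, rule Lim_null_comparison)
    show "eventually (\<lambda>j. norm (measure M (approx (s j) y) - measure M (C y))
      \<le> measure M (sym_diff (approx (s j) y) (C y))) sequentially"
      using M.measure_diff_le_sym_diff approx_sets[OF y] C_sets[OF y] by simp
  qed (rule C_limit[OF y])
  show "(\<lambda>j. measure M (approx (s j) y)) \<longlonglongrightarrow> measure N {y}"
  proof (rule LIM_zero_cancel, rule Lim_null_comparison)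
    show "eventually (\<lambda>j. norm (measure M (approx (s j) y) - measure N {y}) \<le> eps (s j)) sequentially"
      using approx_measure[OF y] by (simp add: less_imp_le)
  qed (rule eps_subseq)
qed

lemma limit_overlap:
  assumes y: "y \<in> space N" and z: "z \<in> space N" and "y \<noteq> z"
  shows "measure M (C y \<inter> C z) = 0"
proof (rule LIMSEQ_unique)
  let ?I = "\<lambda>j. approx (s j) y \<inter> approx (s j) z"
  show "(\<lambda>j. measure M (?I j)) \<longlonglongrightarrow> measure M (C y \<inter> C z)"
  proof (rule LIM_zero_cancel, rule Lim_null_comparison)
    show "eventually (\<lambda>j. norm (measure M (?I j) - measure M (C y \<inter> C z)) \<le>
      measure M (sym_diff (approx (s j) y) (C y)) + measure M (sym_diff (approx (s j) z) (C z))) sequentially"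
      using M.measure_Int_diff_le_sym_diff approx_sets y z C_sets by simp
    show "(\<lambda>j. measure M (sym_diff (approx (s j) y) (C y)) + measure M (sym_diff (approx (s j) z) (C z)))
      \<longlonglongrightarrow> 0"
      using C_limit y z by (intro tendsto_add_zero)
  qed
  show "(\<lambda>j. measure M (?I j)) \<longlonglongrightarrow> 0"
  proof (rule Lim_null_comparison)
    show "eventually (\<lambda>j. norm (measure M (?I j)) \<le> eps (s j)) sequentially"
      using approx_overlap[OF y z \<open>y \<noteq> z\<close>] by (simp add: less_imp_le)
  qed (rule eps_subseq)
qed

lemma limit_equivariant:
  assumes y: "y \<in> space N" and \<gamma>: "\<gamma> \<in> carrier G"
  shows "measure M (sym_diff (set_act f (C y) \<gamma>) (C (g y \<gamma>))) = 0"
proof -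
  let ?B = "\<lambda>j y. approx (s j) y"
  let ?u = "\<lambda>j. measure M (sym_diff (?B j y) (C y)) + 4 * eps (s j) +
    measure M (sym_diff (?B j (g y \<gamma>)) (C (g y \<gamma>)))"
  have gy: "g y \<gamma> \<in> space N" using gN.act_closed y \<gamma> by blast
  have sets: "set_act f (C y) \<gamma> \<in> sets M" "set_act f (?B j y) \<gamma> \<in> sets M"
    "?B j (g y \<gamma>) \<in> sets M" "C (g y \<gamma>) \<in> sets M" for j
    using fM.sets_set_act[OF \<gamma>] C_sets y gy approx_sets by auto
  have bound: "measure M (sym_diff (set_act f (C y) \<gamma>) (C (g y \<gamma>))) \<le> ?u j"
    if "\<gamma> \<in> window (s j)" for j
  proof -
    have "sym_diff (set_act f (C y) \<gamma>) (set_act f (?B j y) \<gamma>) = set_act f (sym_diff (C y) (?B j y)) \<gamma>"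
      using fM.set_act_sym_diff[OF \<gamma>] C_sets[OF y] approx_subset[OF y] sets.sets_into_space
      by metis
    also have "measure M \<dots> = measure M (sym_diff (?B j y) (C y))"
      using fM.measure_set_act[OF \<gamma>] C_sets[OF y] approx_sets[OF y] by (simp add: Un_commute)
    finally have "measure M (sym_diff (set_act f (C y) \<gamma>) (set_act f (?B j y) \<gamma>))
        = measure M (sym_diff (?B j y) (C y))" .
    moreover have "measure M (sym_diff (set_act f (C y) \<gamma>) (C (g y \<gamma>)))
      \<le> measure M (sym_diff (set_act f (C y) \<gamma>) (set_act f (?B j y) \<gamma>))
        + measure M (sym_diff (set_act f (?B j y) \<gamma>) (C (g y \<gamma>)))"
      using sets by (intro M.measure_sym_diff_triangle)
    moreover have "measure M (sym_diff (set_act f (?B j y) \<gamma>) (C (g y \<gamma>)))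
      \<le> measure M (sym_diff (set_act f (?B j y) \<gamma>) (?B j (g y \<gamma>)))
        + measure M (sym_diff (?B j (g y \<gamma>)) (C (g y \<gamma>)))"
      using sets by (intro M.measure_sym_diff_triangle)
    ultimately show ?thesis using approx_shift[OF y that] by linarith
  qed
  have "?u \<longlonglongrightarrow> 0 + 4 * 0 + 0"
    using C_limit[OF y] C_limit[OF gy] eps_subseq by (intro tendsto_intros)
  moreover have "eventually (\<lambda>j. measure M (sym_diff (set_act f (C y) \<gamma>) (C (g y \<gamma>))) \<le> ?u j) sequentially"
    using eventually_subseq[OF s eventually_in_window[OF \<gamma>]] by (rule eventually_mono) (rule bound)
  ultimately have "measure M (sym_diff (set_act f (C y) \<gamma>) (C (g y \<gamma>))) \<le> 0"
    by (intro tendsto_lowerbound) auto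
  then show ?thesis by (simp add: measure_le_0_iff)
qed

end

lemma weak_containment_factor: "is_factor G M f N g"
proof -
  obtain s :: "nat \<Rightarrow> nat" and C where s: "strict_mono s"
    and C: "\<And>y. y \<in> space N \<Longrightarrow> C y \<in> sets M \<and> (\<lambda>j. measure M (sym_diff (approx (s j) y) (C y))) \<longlonglongrightarrow> 0"
    using limit_events by blast
  show ?thesis
    using C limit_measure[OF s] limit_overlap[OF s] limit_equivariant[OF s]
    by (intro is_factor_label[of C]) auto
qed

end

text \<open>The hypotheses instantiate weak_containment_setting.\<close>
theorem theorem1:
  fixes G :: "('g, 'c) monoid_scheme"
    and M :: "'a::polish_space measure" and f :: "'a \<Rightarrow> 'g \<Rightarrow> 'a"
    and N :: "'b measure" and g :: "'b \<Rightarrow> 'g \<Rightarrow> 'b"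
  assumes "group G" and "countable (carrier G)"
    and "prob_space M" and "sets M = sets borel"
    and "mp_action G M f" and "strongly_ergodic G M f"
    and "prob_space N" and "finite (space N)" and "sets N = Pow (space N)"
    and "\<forall>y\<in>space N. measure N {y} > 0"
    and "mp_action G N g"
    and "weakly_contains G M f N g"
  shows "is_factor G M f N g"
proof -
  have "weak_containment_setting G M f N g"
    using assms
    by (simp add: weak_containment_setting_def weak_containment_setting_axioms_def
        finite_target_actions_def finite_target_actions_axioms_def mp_group_action_def)
  then show ?thesis by (rule weak_containment_setting.weak_containment_factor)
qed

end
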